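(* Let $S$ and $Z$ be finite nonempty alphabets with $\#Z\le\#S$, let $\tau:S\to Z$ be surjective, and let $\sigma_\tau:\Sigma\to\Sigma$ be the associated full zip shift map. Then $\sigma_\tau$ is transitive (there exists $x\in\Sigma$ whose forward orbit $\{\sigma_\tau^n(x):n\ge0\}$ is dense in $\Sigma$) and pre-transitive (there exists $x\in\Sigma$ such that $\bigcup_{n\ge0}\sigma_\tau^{-n}(x)$ is dense in $\Sigma$).
   Context: The zip shift space $\Sigma=\Sigma_{Z,S}$ is the set of bi-infinite sequences $x=(x_i)_{i\in\mathbb{Z}}$ with $x_i\in S$ for $i\ge0$ and $x_i\in Z$ for $i<0$, with metric $d(x,y)=2^{-M(x,y)}$, $M(x,y)=\min\{|i|:x_i\neq y_i\}$. The zip shift map is defined by $(\sigma_\tau x)_i=x_{i+1}$ for $i\neq-1$ and $(\sigma_\tau x)_{-1}=\tau(x_0)$. Here $\sigma_\tau^{-n}(x)$ denotes the set of all $y\in\Sigma$ with $\sigma_\tau^n(y)=x$. *)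

theory Defs
  imports "HOL-Analysis.Analysis"
begin

definition zip_space :: "'a set \<Rightarrow> 'a set \<Rightarrow> (int \<Rightarrow> 'a) set" where
  "zip_space Z S = {x. (\<forall>i\<ge>0. x i \<in> S) \<and> (\<forall>i<0. x i \<in> Z)}"

definition zip_M :: "(int \<Rightarrow> 'a) \<Rightarrow> (int \<Rightarrow> 'a) \<Rightarrow> nat" where
  "zip_M x y = (LEAST n. \<exists>i. nat \<bar>i\<bar> = n \<and> x i \<noteq> y i)"

definition zip_dist :: "(int \<Rightarrow> 'a) \<Rightarrow> (int \<Rightarrow> 'a) \<Rightarrow> real" where
  "zip_dist x y = (if x = y then 0 else (1/2) ^ zip_M x y)"

definition zip_shift :: "('a \<Rightarrow> 'a) \<Rightarrow> (int \<Rightarrow> 'a) \<Rightarrow> (int \<Rightarrow> 'a)" where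
  "zip_shift \<tau> x = (\<lambda>i. if i = -1 then \<tau> (x 0) else x (i + 1))"

definition zip_dense :: "'a set \<Rightarrow> 'a set \<Rightarrow> (int \<Rightarrow> 'a) set \<Rightarrow> bool" where
  "zip_dense Z S A \<longleftrightarrow> A \<subseteq> zip_space Z S \<and>
     (\<forall>x\<in>zip_space Z S. \<forall>e>0. \<exists>y\<in>A. zip_dist x y < e)"

definition zip_transitive :: "'a set \<Rightarrow> 'a set \<Rightarrow> ('a \<Rightarrow> 'a) \<Rightarrow> bool" where
  "zip_transitive Z S \<tau> \<longleftrightarrow>
     (\<exists>x\<in>zip_space Z S. zip_dense Z S {(zip_shift \<tau> ^^ n) x | n. True})"

definition zip_pretransitive :: "'a set \<Rightarrow> 'a set \<Rightarrow> ('a \<Rightarrow> 'a) \<Rightarrow> bool" where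
  "zip_pretransitive Z S \<tau> \<longleftrightarrow>
     (\<exists>x\<in>zip_space Z S. zip_dense Z S
        (\<Union>n. {y \<in> zip_space Z S. (zip_shift \<tau> ^^ n) y = x}))"

end

theory Submission
  imports Defs
begin

text \<open>
  Both properties amount to meeting every cylinder that fixes the coordinates -N..N, and
  both come from a sequence in which every finite word occurs arbitrarily late. The point
  is that \<open>\<sigma>\<^sup>n\<close> applies \<open>\<tau>\<close> exactly once to each symbol crossing from coordinate 0 to -1.
  For transitivity, let the nonnegative half of x be such a sequence over S: far out it
  contains \<open>\<tau>\<close>-lifts of t_-N..t_-1 followed by t_0..t_N, and shifting this block to the
  origin gives a point of the cylinder of t. For pre-transitivity, let the negative half
  of x be such a sequence over Z. A preimage of x under \<open>\<sigma>\<^sup>n\<close> may carry on [0, n) any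
  symbols that \<open>\<tau>\<close> maps to x_-n..x_-1. So if \<open>x\<^sub>j\<^sub>-\<^sub>n\<close> is t_j for -N \<le> j < 0 and
  \<open>\<tau>(t\<^sub>j)\<close> for 0 \<le> j \<le> N, the preimage that equals t on [0, N] lies in the cylinder of t.
\<close>

lemma infinite_concat:
  fixes g :: "nat \<Rightarrow> 'a list"
  assumes "\<And>k. g k \<noteq> []"
  obtains u :: "nat \<Rightarrow> 'a"
  where "range u \<subseteq> (\<Union>k. set (g k))"
    and "\<And>k l. l < length (g k) \<Longrightarrow> u (length (concat (map g [0..<k])) + l) = g k ! l"
proof -
  define L where "L k = concat (map g [0..<k])" for k
  have L_Suc: "L (Suc k) = L k @ g k" for k
    by (simp add: L_def)
  have L_extend: "\<exists>r. L (k + d) = L k @ r" for k d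
    by (induction d) (auto simp: L_Suc)
  have length_L: "k \<le> length (L k)" for k
  proof (induction k)
    case (Suc k)
    have "0 < length (g k)"
      using assms by simp
    with Suc.IH show ?case
      unfolding L_Suc length_append by linarith
  qed simp
  define u where "u i = L (Suc i) ! i" for i
  have u_L: "u i = L m ! i" if "i < length (L m)" for i m
  proof -
    have "L (max m (Suc i)) ! i = L k ! i" if "k \<le> max m (Suc i)" "i < length (L k)" for k
      using L_extend[of k "max m (Suc i) - k"] that by (auto simp: nth_append)
    from this[of m] this[of "Suc i"] show ?thesis
      using \<open>i < length (L m)\<close> length_L[of "Suc i"] by (simp add: u_def)
  qed
  show thesis
  proof
    have "u i \<in> set (L (Suc i))" for i
      using length_L[of "Suc i"] by (simp add: u_def)
    then show "range u \<subseteq> (\<Union>k. set (g k))"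
      by (auto simp: L_def)
    show "u (length (concat (map g [0..<k])) + l) = g k ! l" if "l < length (g k)" for k l
      using u_L[of _ "Suc k"] that by (simp add: L_Suc nth_append flip: L_def)
  qed
qed

lemma universal_sequence:
  assumes "A \<noteq> {}" "countable A"
  obtains u :: "nat \<Rightarrow> 'a" where "range u \<subseteq> A"
    and "\<And>w (n::nat) m. (\<And>l. l < n \<Longrightarrow> w l \<in> A) \<Longrightarrow> \<exists>p\<ge>m. \<forall>l<n. u (p + l) = w l"
proof -
  obtain a where "a \<in> A"
    using assms(1) by blast
  define f where "f = from_nat_into (lists A)"
  have range_f: "range f = lists A"
    unfolding f_def using assms(2) by (intro range_from_nat_into) auto
  obtain u where u_range: "range u \<subseteq> (\<Union>k. set (a # f k))"
    and u_word: "\<And>k l. l < length (a # f k) \<Longrightarrow>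
        u (length (concat (map (\<lambda>j. a # f j) [0..<k])) + l) = (a # f k) ! l"
    using infinite_concat[of "\<lambda>k. a # f k"] by blast
  show thesis
  proof
    show "range u \<subseteq> A"
      using u_range range_f \<open>a \<in> A\<close> by (fastforce simp: in_lists_conv_set)
    fix w and n :: nat and m
    assume "\<And>l. l < n \<Longrightarrow> w l \<in> A"
    \<comment> \<open>Padding the word with m letters in front forces its occurrence beyond position m.\<close>
    then have "replicate m a @ map w [0..<n] \<in> lists A"
      using \<open>a \<in> A\<close> by auto
    then obtain k where k: "f k = replicate m a @ map w [0..<n]"
      using range_f by (metis rangeE)
    define p where "p = length (concat (map (\<lambda>j. a # f j) [0..<k])) + Suc m"
    have "u (p + l) = w l" if "l < n" for l
      using u_word[of "Suc m + l" k] that by (simp add: k p_def nth_append add.assoc)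
    then show "\<exists>p\<ge>m. \<forall>l<n. u (p + l) = w l"
      by (intro exI[of _ p]) (auto simp: p_def)
  qed
qed

lemma funpow_zip_shift:
  "(zip_shift \<tau> ^^ n) x i =
     (if i < 0 \<and> 0 \<le> i + int n then \<tau> (x (i + int n)) else x (i + int n))"
proof (induction n arbitrary: i)
  case (Suc n)
  have "zip_shift \<tau> y i = (if i = -1 then \<tau> (y 0) else y (i + 1))" for y
    by (simp add: zip_shift_def)
  then show ?case
    by (simp add: Suc.IH algebra_simps)
qed auto

lemma funpow_zip_shift_in_space:
  assumes "x \<in> zip_space Z S" "\<tau> ` S \<subseteq> Z"
  shows "(zip_shift \<tau> ^^ n) x \<in> zip_space Z S"
  using assms by (auto simp: zip_space_def funpow_zip_shift)

lemma funpow_zip_shift_preimage: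
  assumes "x \<in> zip_space Z S"
    and "\<And>j. 0 \<le> j \<Longrightarrow> j < int n \<Longrightarrow> w j \<in> S \<and> \<tau> (w j) = x (j - int n)"
  defines "y \<equiv> \<lambda>j. if 0 \<le> j \<and> j < int n then w j else x (j - int n)"
  shows "y \<in> zip_space Z S" and "(zip_shift \<tau> ^^ n) y = x"
  using assms by (auto simp: zip_space_def funpow_zip_shift)

lemma zip_dist_less_if_agree:
  assumes "\<And>i. \<bar>i\<bar> \<le> int N \<Longrightarrow> x i = y i"
  shows "zip_dist x y < (1/2) ^ N"
proof (cases "x = y")
  case False
  then have "\<exists>n i. nat \<bar>i\<bar> = n \<and> x i \<noteq> y i"
    by auto
  from LeastI_ex[OF this] obtain i where "nat \<bar>i\<bar> = zip_M x y" "x i \<noteq> y i"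
    unfolding zip_M_def by blast
  with assms have "N < zip_M x y"
    by force
  then have "(1/2::real) ^ zip_M x y < (1/2) ^ N"
    by (intro power_strict_decreasing) auto
  with False show ?thesis
    by (simp add: zip_dist_def)
qed (simp add: zip_dist_def)

lemma zip_denseI:
  assumes "A \<subseteq> zip_space Z S"
    and "\<And>t N. t \<in> zip_space Z S \<Longrightarrow> \<exists>y\<in>A. \<forall>i. \<bar>i\<bar> \<le> int N \<longrightarrow> t i = y i"
  shows "zip_dense Z S A"
  unfolding zip_dense_def
proof (intro conjI assms(1) ballI allI impI)
  fix t and e :: real
  assume "t \<in> zip_space Z S" "0 < e"
  obtain N where "(1/2::real) ^ N < e"
    using real_arch_pow_inv[OF \<open>0 < e\<close>, of "1/2"] by auto
  moreover obtain y where "y \<in> A" "\<forall>i. \<bar>i\<bar> \<le> int N \<longrightarrow> t i = y i"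
    using assms(2)[OF \<open>t \<in> zip_space Z S\<close>] by blast
  ultimately show "\<exists>y\<in>A. zip_dist t y < e"
    using zip_dist_less_if_agree[of N t y] by force
qed

lemma zip_transitive_if_surj:
  assumes "countable S" "S \<noteq> {}" "\<tau> ` S = Z"
  shows "zip_transitive Z S \<tau>"
proof -
  obtain u where u_S: "range u \<subseteq> S"
    and u_universal: "\<And>w (n::nat) m. (\<And>l. l < n \<Longrightarrow> w l \<in> S) \<Longrightarrow> \<exists>p\<ge>m. \<forall>l<n. u (p + l) = w l"
    using universal_sequence[OF assms(2,1)] by blast
  obtain s where "s \<in> S"
    using assms(2) by blast
  define x where "x i = (if i < 0 then \<tau> s else u (nat i))" for i
  have x_space: "x \<in> zip_space Z S"
    using u_S \<open>s \<in> S\<close> assms(3) by (auto simp: zip_space_def x_def)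
  have orbit_space: "{(zip_shift \<tau> ^^ n) x | n. True} \<subseteq> zip_space Z S"
    using funpow_zip_shift_in_space[OF x_space] assms(3) by auto
  have "\<exists>n. \<forall>i. \<bar>i\<bar> \<le> int N \<longrightarrow> t i = (zip_shift \<tau> ^^ n) x i"
    if t: "t \<in> zip_space Z S" for t N
  proof -
    \<comment> \<open>w spells t on [-N, N], lifting the negative coordinates since \<open>\<sigma>\<^sup>n\<close> will apply \<open>\<tau>\<close> to them.\<close>
    define w where "w l = (let i = int l - int N in if i < 0 then inv_into S \<tau> (t i) else t i)" for l
    have "w l \<in> S" for l
      using t assms(3) by (auto simp: w_def Let_def zip_space_def inv_into_into)
    then obtain p where "N \<le> p" and p: "\<forall>l<2 * N + 1. u (p + l) = w l"
      using u_universal by blast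
    have "(zip_shift \<tau> ^^ (p + N)) x i = t i" if "\<bar>i\<bar> \<le> int N" for i
    proof -
      have "\<not> i + int (p + N) < 0" "nat (i + int (p + N)) = p + nat (i + int N)"
        "nat (i + int N) < 2 * N + 1"
        using that by auto
      then have "x (i + int (p + N)) = w (nat (i + int N))"
        using p unfolding x_def by presburger
      with that t assms(3) \<open>N \<le> p\<close> show ?thesis
        by (auto simp: funpow_zip_shift w_def zip_space_def f_inv_into_f)
    qed
    then show ?thesis
      by metis
  qed
  then have "zip_dense Z S {(zip_shift \<tau> ^^ n) x | n. True}"
    using orbit_space by (intro zip_denseI) blast+
  with x_space show ?thesis
    unfolding zip_transitive_def by blast
qed

lemma zip_pretransitive_if_surj:
  assumes "countable S" "S \<noteq> {}" "\<tau> ` S = Z"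
  shows "zip_pretransitive Z S \<tau>"
proof -
  have "countable Z" "Z \<noteq> {}"
    using assms by auto
  then obtain v where v_Z: "range v \<subseteq> Z"
    and v_universal: "\<And>w (n::nat) m. (\<And>l. l < n \<Longrightarrow> w l \<in> Z) \<Longrightarrow> \<exists>p\<ge>m. \<forall>l<n. v (p + l) = w l"
    using universal_sequence by metis
  obtain s where "s \<in> S"
    using assms(2) by blast
  define x where "x i = (if i < 0 then v (nat (- i)) else s)" for i
  have x_space: "x \<in> zip_space Z S"
    using v_Z \<open>s \<in> S\<close> by (auto simp: zip_space_def x_def)
  define B where "B = (\<Union>n. {y \<in> zip_space Z S. (zip_shift \<tau> ^^ n) y = x})"
  have "\<exists>y\<in>B. \<forall>j. \<bar>j\<bar> \<le> int N \<longrightarrow> t j = y j"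
    if t: "t \<in> zip_space Z S" for t N
  proof -
    \<comment> \<open>The negative half of x is read leftwards, so d spells the target block backwards.\<close>
    define d where "d l = (let j = int N - int l in if j < 0 then t j else \<tau> (t j))" for l
    have "d l \<in> Z" for l
      using t assms(3) by (auto simp: d_def Let_def zip_space_def)
    then obtain p where "1 \<le> p" and p: "\<forall>l<2 * N + 1. v (p + l) = d l"
      using v_universal by blast
    define n where "n = p + N"
    have x_window: "x (j - int n) = (if j < 0 then t j else \<tau> (t j))" if "\<bar>j\<bar> \<le> int N" for j
    proof -
      have "j - int n < 0" "nat (- (j - int n)) = p + nat (int N - j)" "nat (int N - j) < 2 * N + 1"
        using that \<open>1 \<le> p\<close> by (auto simp: n_def)
      moreover have "d (nat (int N - j)) = (if j < 0 then t j else \<tau> (t j))"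
        using that by (simp add: d_def abs_le_iff)
      ultimately show ?thesis
        using p by (simp add: x_def)
    qed
    define w where "w j = (if j \<le> int N then t j else inv_into S \<tau> (x (j - int n)))" for j
    define y where "y = (\<lambda>j. if 0 \<le> j \<and> j < int n then w j else x (j - int n))"
    have w_lifts: "w j \<in> S \<and> \<tau> (w j) = x (j - int n)" if "0 \<le> j" "j < int n" for j
      using that t x_space x_window[of j] assms(3)
      by (auto simp: w_def zip_space_def inv_into_into f_inv_into_f)
    have "y \<in> zip_space Z S" "(zip_shift \<tau> ^^ n) y = x"
      using funpow_zip_shift_preimage[OF x_space w_lifts] unfolding y_def by blast+
    then have "y \<in> B"
      unfolding B_def by blast
    moreover have "t j = y j" if "\<bar>j\<bar> \<le> int N" for j
      using x_window[OF that] that \<open>1 \<le> p\<close> by (cases "j < 0") (simp_all add: y_def w_def n_def)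
    ultimately show ?thesis
      by blast
  qed
  moreover have "B \<subseteq> zip_space Z S"
    unfolding B_def by blast
  ultimately have "zip_dense Z S B"
    by (intro zip_denseI) blast+
  with x_space show ?thesis
    unfolding zip_pretransitive_def B_def by blast
qed

theorem theorem2:
  fixes S Z :: "'a set" and \<tau> :: "'a \<Rightarrow> 'a"
  assumes "finite S" "S \<noteq> {}" "finite Z" "Z \<noteq> {}"
    and "card Z \<le> card S"
    and "\<tau> ` S = Z"
  shows "zip_transitive Z S \<tau> \<and> zip_pretransitive Z S \<tau>"
proof -
  \<comment> \<open>\<open>card Z \<le> card S\<close> is implied by \<open>\<tau> ` S = Z\<close>; finiteness is only used as countability.\<close>
  have "countable S"
    using \<open>finite S\<close> by (rule countable_finite)
  with \<open>S \<noteq> {}\<close> \<open>\<tau> ` S = Z\<close> show ?thesis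
    using zip_transitive_if_surj zip_pretransitive_if_surj by blast
qed

end
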